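(* For $f_0\ge 1$ define $$\beta(f_0)=\frac12\int_{\phi_*(f_0)}^{\phi^*(f_0)}\frac{d\phi}{\sqrt{f_0-f(\phi)}}.$$ Then $\beta$ is a smooth function mapping $(1,\infty)$ bijectively onto $(\pi/\sqrt2,\infty)$, and $\frac{d\beta}{df_0}>0$ on $(1,\infty)$.
   Context: Let $f(\phi)=e^\phi-\phi$ for $\phi\in\mathbb R$; $f$ maps $\mathbb R$ onto $[1,\infty)$. For $f_1\ge1$, $\phi_*(f_1)\le0$ and $\phi^*(f_1)\ge0$ denote the two solutions $\phi$ of $f(\phi)=f_1$ (they coincide, equal to $0$, when $f_1=1$). *)

theory Defs
  imports "HOL-Analysis.Analysis"
begin

definition ff :: "real \<Rightarrow> real" where
  "ff \<phi> = exp \<phi> - \<phi>"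

definition phi_lo :: "real \<Rightarrow> real" where
  "phi_lo f1 = (THE \<phi>. \<phi> \<le> 0 \<and> ff \<phi> = f1)"

definition phi_hi :: "real \<Rightarrow> real" where
  "phi_hi f1 = (THE \<phi>. \<phi> \<ge> 0 \<and> ff \<phi> = f1)"

text \<open>beta(f0) = 1/2 * integral over [phi_lo f0, phi_hi f0] of 1/sqrt(f0 - ff phi)
  (improper at the endpoints; taken as the Henstock-Kurzweil integral on the closed interval).\<close>
definition beta :: "real \<Rightarrow> real" where
  "beta f0 = 1/2 * integral {phi_lo f0..phi_hi f0} (\<lambda>\<phi>. 1 / sqrt (f0 - ff \<phi>))"

end

theory Submission
  imports Defs
begin

text \<open>Write f phi - 1 = u(phi)^2 / 2 with u = sroot, a smooth increasing bijection of the real line.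
  For f0 = 1 + a^2/2 the substitution u(phi) = a sin theta turns beta f0 into G(a) / sqrt 2, where
  G(a) is the integral over [-pi/2, pi/2] of g(a sin theta) and g = (u^-1)' is smooth; hence beta
  is smooth. As the integral of sin theta vanishes, G'(a) is the integral of
  sin theta (g'(a sin theta) + 1/3), and g'(y) + 1/3 has the sign of y by an elementary inequality
  for exp. So G increases on [0, inf), with G 0 = pi and G a >= pi a / 4 because g y >= -y.\<close>

section \<open>Functions of class C^k\<close>

text \<open>Derivatives are taken at x rather than within S, so the notion is meant for open S.\<close>

fun Ck_on :: "nat \<Rightarrow> real set \<Rightarrow> (real \<Rightarrow> real) \<Rightarrow> bool" where
  "Ck_on 0 S f \<longleftrightarrow> continuous_on S f"
| "Ck_on (Suc n) S f \<longleftrightarrow> continuous_on S f \<and>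
     (\<exists>f'. (\<forall>x\<in>S. (f has_real_derivative f' x) (at x)) \<and> Ck_on n S f')"

lemma Ck_on_imp_continuous_on: "Ck_on n S f \<Longrightarrow> continuous_on S f"
  by (cases n) auto

lemma Ck_on_SucD: "Ck_on (Suc n) S f \<Longrightarrow> Ck_on n S f"
proof (induction n arbitrary: f)
  case (Suc n)
  then show ?case by (metis Ck_on.simps(2))
qed simp

lemma Ck_on_le: "m \<le> n \<Longrightarrow> Ck_on n S f \<Longrightarrow> Ck_on m S f"
  by (induction n rule: dec_induct) (metis Ck_on_SucD)+

lemma Ck_on_cong:
  assumes "open S" "\<And>x. x \<in> S \<Longrightarrow> f x = g x" "Ck_on n S f"
  shows "Ck_on n S g"
proof (cases n)
  case 0
  then show ?thesis using assms continuous_on_eq by (metis Ck_on.simps(1))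
next
  case (Suc m)
  with assms obtain f' where "\<forall>x\<in>S. (f has_real_derivative f' x) (at x)" "Ck_on m S f'"
    "continuous_on S f" by auto
  moreover from this have "\<forall>x\<in>S. (g has_real_derivative f' x) (at x)"
    using assms by (metis has_field_derivative_transform_within_open)
  ultimately show ?thesis using Suc assms(2) by (auto intro: continuous_on_eq)
qed

lemma Ck_on_const: "Ck_on n S (\<lambda>x. c)"
  by (induction n arbitrary: c) (auto intro!: exI[of _ "\<lambda>x. 0"] derivative_eq_intros)

lemma Ck_on_ident: "Ck_on n S (\<lambda>x. x)"
  by (cases n) (auto intro!: exI[of _ "\<lambda>x. 1"] derivative_eq_intros Ck_on_const continuous_on_id)

lemma Ck_on_add: "Ck_on n S f \<Longrightarrow> Ck_on n S g \<Longrightarrow> Ck_on n S (\<lambda>x. f x + g x)"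
proof (induction n arbitrary: f g)
  case (Suc n)
  then obtain f' g' where "\<forall>x\<in>S. (f has_real_derivative f' x) (at x)" "Ck_on n S f'"
    "\<forall>x\<in>S. (g has_real_derivative g' x) (at x)" "Ck_on n S g'" "continuous_on S f" "continuous_on S g"
    by auto
  then show ?case using Suc.IH
    by (auto intro!: exI[of _ "\<lambda>x. f' x + g' x"] derivative_eq_intros continuous_on_add)
qed (auto intro: continuous_on_add)

lemma Ck_on_mult: "Ck_on n S f \<Longrightarrow> Ck_on n S g \<Longrightarrow> Ck_on n S (\<lambda>x. f x * g x)"
proof (induction n arbitrary: f g)
  case (Suc n)
  then obtain f' g' where d: "\<forall>x\<in>S. (f has_real_derivative f' x) (at x)" "Ck_on n S f'"
    "\<forall>x\<in>S. (g has_real_derivative g' x) (at x)" "Ck_on n S g'" "continuous_on S f" "continuous_on S g"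
    by auto
  have "Ck_on n S f" "Ck_on n S g"
    using Suc.prems Ck_on_SucD by blast+
  then have "Ck_on n S (\<lambda>x. f' x * g x + f x * g' x)"
    using Suc.IH d(2,4) by (intro Ck_on_add)
  then show ?case using d
    by (auto intro!: exI[of _ "\<lambda>x. f' x * g x + f x * g' x"] derivative_eq_intros continuous_on_mult)
qed (auto intro: continuous_on_mult)

lemma Ck_on_compose:
  assumes "Ck_on n T f" "Ck_on n S g" "g ` S \<subseteq> T"
  shows "Ck_on n S (\<lambda>x. f (g x))"
  using assms
proof (induction n arbitrary: f g)
  case 0
  then show ?case using continuous_on_compose2 by (metis Ck_on.simps(1))
next
  case (Suc n)
  then obtain f' g' where d: "\<forall>x\<in>T. (f has_real_derivative f' x) (at x)" "Ck_on n T f'"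
    "\<forall>x\<in>S. (g has_real_derivative g' x) (at x)" "Ck_on n S g'" "continuous_on T f" "continuous_on S g"
    by auto
  have "Ck_on n S g"
    using Suc.prems Ck_on_SucD by blast
  then have "Ck_on n S (\<lambda>x. f' (g x) * g' x)"
    using Suc.IH Suc.prems(3) d(2,4) by (intro Ck_on_mult)
  moreover have "\<forall>x\<in>S. ((\<lambda>x. f (g x)) has_real_derivative f' (g x) * g' x) (at x)"
    using d Suc.prems(3) by (blast intro: DERIV_chain2)
  moreover have "continuous_on S (\<lambda>x. f (g x))"
    using d Suc.prems(3) continuous_on_compose2 by blast
  ultimately show ?case by auto
qed

lemma Ck_on_inverse:
  assumes "Ck_on n S f" "\<And>x. x \<in> S \<Longrightarrow> f x \<noteq> 0"
  shows "Ck_on n S (\<lambda>x. inverse (f x))"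
  using assms
proof (induction n arbitrary: f)
  case (Suc n)
  then obtain f' where d: "\<forall>x\<in>S. (f has_real_derivative f' x) (at x)" "Ck_on n S f'"
    "continuous_on S f" by auto
  have "Ck_on n S (\<lambda>x. inverse (f x))"
    using Suc.IH Suc.prems Ck_on_SucD by blast
  then have "Ck_on n S (\<lambda>x. - 1 * (f' x * (inverse (f x) * inverse (f x))))"
    using d(2) by (intro Ck_on_mult Ck_on_const)
  moreover have "\<forall>x\<in>S. ((\<lambda>x. inverse (f x)) has_real_derivative
      - 1 * (f' x * (inverse (f x) * inverse (f x)))) (at x)"
    using d Suc.prems by (auto intro!: derivative_eq_intros simp: field_simps power2_eq_square)
  ultimately show ?case using d Suc.prems by (auto intro: continuous_on_inverse)
qed (auto intro: continuous_on_inverse)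

lemma Ck_on_exp: "Ck_on n S exp"
  by (induction n) (auto intro!: exI[of _ exp] DERIV_exp continuous_on_exp continuous_on_id)

lemma Ck_on_sqrt: "Ck_on n {0<..} sqrt"
proof (induction n)
  case (Suc n)
  have "Ck_on n {0<..} (\<lambda>x. 2 * sqrt x)"
    by (rule Ck_on_mult[OF Ck_on_const Suc.IH])
  then have "Ck_on n {0<..} (\<lambda>x. inverse (2 * sqrt x))"
    by (rule Ck_on_inverse) auto
  then show ?case
    by (auto intro!: exI[of _ "\<lambda>x. inverse (2 * sqrt x)"] DERIV_real_sqrt
        continuous_on_real_sqrt continuous_on_id)
qed (simp add: continuous_on_real_sqrt continuous_on_id)

lemma Ck_on_Suc_has_deriv:
  assumes "Ck_on (Suc n) S f" "x \<in> S"
  shows "(f has_real_derivative deriv f x) (at x)"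
proof -
  from assms obtain f' where "(f has_real_derivative f' x) (at x)"
    by auto
  then show ?thesis by (metis DERIV_imp_deriv)
qed

lemma Ck_on_deriv:
  assumes "open S" "Ck_on (Suc n) S f"
  shows "Ck_on n S (deriv f)"
proof -
  from assms obtain f' where "\<forall>x\<in>S. (f has_real_derivative f' x) (at x)" "Ck_on n S f'"
    by auto
  then show ?thesis using Ck_on_cong[OF assms(1)] DERIV_imp_deriv by metis
qed

lemma has_real_derivative_inverse_function:
  fixes f g :: "real \<Rightarrow> real"
  assumes f: "\<And>x. (f has_real_derivative f' x) (at x)" and f': "\<And>x. f' x \<noteq> 0"
    and gf: "\<And>x. g (f x) = x" and fg: "\<And>y. f (g y) = y"
  shows "(g has_real_derivative inverse (f' (g y))) (at y)"
proof -
  have "isCont g (f (g y))"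
    by (rule isCont_inverse_function[of 1]) (simp_all add: gf DERIV_isCont[OF f])
  then have "isCont g y"
    by (simp only: fg)
  show ?thesis
    by (rule DERIV_inverse_function[where a = "y - 1" and b = "y + 1", OF f f'])
      (simp_all add: fg \<open>isCont g y\<close>)
qed

lemma Ck_on_inverse_function:
  fixes f g :: "real \<Rightarrow> real"
  assumes f: "Ck_on (Suc n) UNIV f" and f': "\<And>x. deriv f x \<noteq> 0"
    and gf: "\<And>x. g (f x) = x" and fg: "\<And>y. f (g y) = y"
  shows "Ck_on (Suc n) UNIV g"
proof -
  have g': "(g has_real_derivative inverse (deriv f (g y))) (at y)" for y
    by (rule has_real_derivative_inverse_function[OF Ck_on_Suc_has_deriv[OF f UNIV_I] f' gf fg])
  have cont: "continuous_on UNIV g"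
    using DERIV_isCont[OF g'] by (blast intro: continuous_at_imp_continuous_on)
  have "Ck_on m UNIV g" if "m \<le> Suc n" for m
    using that
  proof (induction m)
    case (Suc m)
    have "Ck_on m UNIV (deriv f)"
      using Ck_on_le[OF Suc.prems f] by (rule Ck_on_deriv[OF open_UNIV])
    moreover have "Ck_on m UNIV g"
      using Suc by simp
    ultimately have "Ck_on m UNIV (\<lambda>y. inverse (deriv f (g y)))"
      by (intro Ck_on_inverse f' Ck_on_compose[of m UNIV "deriv f" UNIV g]) auto
    then show ?case
      using g' cont by (auto intro!: exI[of _ "\<lambda>y. inverse (deriv f (g y))"])
  qed (simp add: cont)
  then show ?thesis by blast
qed

lemma Ck_on_higher_deriv_differentiable:
  assumes "open S" "Ck_on (Suc n) S f" "x \<in> S"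
  shows "(deriv ^^ n) f differentiable (at x)"
  using assms(2)
proof (induction n arbitrary: f)
  case 0
  then show ?case using assms(3) by (auto simp: real_differentiable_def)
next
  case (Suc n)
  then have "(deriv ^^ n) (deriv f) differentiable (at x)"
    using Ck_on_deriv[OF assms(1)] by blast
  then show ?case by (simp add: funpow_Suc_right del: funpow.simps)
qed

section \<open>Smooth dependence of integrals on a scaling parameter\<close>

lemma continuous_on_scaled_kernel:
  fixes g w s :: "real \<Rightarrow> real"
  assumes g: "continuous_on UNIV g" and w: "continuous_on {c..d} w" and s: "continuous_on {c..d} s"
  shows "continuous_on (UNIV \<times> {c..d}) (\<lambda>(x, t). w t * g (x * s t))"
proof -
  have w': "continuous_on (UNIV \<times> {c..d}) (\<lambda>p. w (snd p))"
    by (rule continuous_on_compose2[OF w]) (auto intro: continuous_intros)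
  have s': "continuous_on (UNIV \<times> {c..d}) (\<lambda>p. s (snd p))"
    by (rule continuous_on_compose2[OF s]) (auto intro: continuous_intros)
  have "continuous_on (UNIV \<times> {c..d}) (\<lambda>p. g (fst p * s (snd p)))"
    by (rule continuous_on_compose2[OF g continuous_on_mult[OF continuous_on_fst[OF continuous_on_id] s']])
      auto
  then show ?thesis
    unfolding split_beta using continuous_on_mult[OF w'] by blast
qed

lemma continuous_on_integral_scaled:
  fixes g w s :: "real \<Rightarrow> real"
  assumes "continuous_on UNIV g" "continuous_on {c..d} w" "continuous_on {c..d} s"
  shows "continuous_on UNIV (\<lambda>x. integral {c..d} (\<lambda>t. w t * g (x * s t)))"
  using integral_continuous_on_param[of UNIV c d "\<lambda>x t. w t * g (x * s t)"]
    continuous_on_scaled_kernel[OF assms]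
  unfolding cbox_interval by blast

lemma has_real_derivative_integral_scaled:
  fixes g g' w s :: "real \<Rightarrow> real"
  assumes g: "\<And>x. (g has_real_derivative g' x) (at x)" and g': "continuous_on UNIV g'"
    and w: "continuous_on {c..d} w" and s: "continuous_on {c..d} s"
  shows "((\<lambda>x. integral {c..d} (\<lambda>t. w t * g (x * s t))) has_real_derivative
           integral {c..d} (\<lambda>t. (w t * s t) * g' (x * s t))) (at x)"
proof -
  have "continuous_on UNIV g"
    by (intro continuous_at_imp_continuous_on ballI DERIV_isCont[OF g])
  then have "continuous_on {c..d} (\<lambda>t. g (x * s t))" for x
    by (rule continuous_on_compose2) (auto intro: continuous_intros s)
  then have int: "(\<lambda>t. w t * g (x * s t)) integrable_on cbox c d" for x
    unfolding cbox_interval by (intro integrable_continuous_interval continuous_on_mult w)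
  have deriv: "((\<lambda>x. w t * g (x * s t)) has_real_derivative (w t * s t) * g' (x * s t))
      (at x within UNIV)" for x t
  proof -
    have "((\<lambda>x. x * s t) has_real_derivative s t) (at x)"
      by (auto intro!: derivative_eq_intros)
    from DERIV_cmult[OF DERIV_chain2[OF g this], of "w t"] show ?thesis
      by (simp add: mult_ac)
  qed
  have cont: "continuous_on (UNIV \<times> cbox c d) (\<lambda>(x, t). (w t * s t) * g' (x * s t))"
    unfolding cbox_interval using g' continuous_on_mult[OF w s] s by (rule continuous_on_scaled_kernel)
  show ?thesis
    using leibniz_rule_field_derivative[OF deriv int cont] by (simp add: cbox_interval)
qed

lemma Ck_on_integral_scaled:
  fixes g w s :: "real \<Rightarrow> real"
  assumes "Ck_on (Suc n) UNIV g" "continuous_on {c..d} w" "continuous_on {c..d} s"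
  shows "Ck_on n UNIV (\<lambda>x. integral {c..d} (\<lambda>t. w t * g (x * s t)))"
  using assms
proof (induction n arbitrary: g w)
  case 0
  then show ?case using continuous_on_integral_scaled Ck_on_imp_continuous_on by simp
next
  case (Suc n)
  then obtain g' where g': "\<forall>x. (g has_real_derivative g' x) (at x)" "Ck_on (Suc n) UNIV g'"
    "continuous_on UNIV g" by auto
  have "continuous_on {c..d} (\<lambda>t. w t * s t)"
    using Suc.prems by (intro continuous_on_mult)
  then have "Ck_on n UNIV (\<lambda>x. integral {c..d} (\<lambda>t. (w t * s t) * g' (x * s t)))"
    using Suc.IH g' Suc.prems by blast
  moreover have "\<forall>x. ((\<lambda>x. integral {c..d} (\<lambda>t. w t * g (x * s t))) has_real_derivative
      integral {c..d} (\<lambda>t. (w t * s t) * g' (x * s t))) (at x)"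
    using has_real_derivative_integral_scaled g' Suc.prems Ck_on_imp_continuous_on by blast
  ultimately show ?case
    using continuous_on_integral_scaled g' Suc.prems by auto
qed

section \<open>A smooth square root of f - 1\<close>

definition exp_remainder :: "real \<Rightarrow> real" where
  "exp_remainder x = integral {0..1} (\<lambda>t. (1 - t) * exp (x * t))"

lemma Ck_on_exp_remainder: "Ck_on n UNIV exp_remainder"
  unfolding exp_remainder_def[abs_def]
  by (rule Ck_on_integral_scaled[OF Ck_on_exp]) (auto intro: continuous_intros)

lemma exp_remainder_eq: "x\<^sup>2 * exp_remainder x = exp x - x - 1"
proof (cases "x = 0")
  case False
  let ?A = "\<lambda>t. ((1 - t) / x + 1 / x\<^sup>2) * exp (x * t)"
  have "((\<lambda>t. (1 - t) * exp (x * t)) has_integral (?A 1 - ?A 0)) {0..1}"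
  proof (rule fundamental_theorem_of_calculus)
    fix t :: real
    have "(?A has_real_derivative (- 1 / x) * exp (x * t) + exp (x * t) * x * ((1 - t) / x + 1 / x\<^sup>2))
        (at t)"
      using False by (auto intro!: derivative_eq_intros simp: field_simps)
    also have "(- 1 / x) * exp (x * t) + exp (x * t) * x * ((1 - t) / x + 1 / x\<^sup>2) =
        (1 - t) * exp (x * t)"
      using False by (simp add: field_simps power2_eq_square)
    finally show "(?A has_vector_derivative (1 - t) * exp (x * t)) (at t within {0..1})"
      by (simp add: has_real_derivative_iff_has_vector_derivative has_vector_derivative_at_within)
  qed simp
  then have "exp_remainder x = ?A 1 - ?A 0"
    unfolding exp_remainder_def by (rule integral_unique)
  then show ?thesis
    using False by (simp add: field_simps power2_eq_square)
qed simp

lemma exp_remainder_0: "exp_remainder 0 = 1/2"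
proof -
  let ?A = "\<lambda>t::real. t - t\<^sup>2 / 2"
  have "((\<lambda>t. (1 - t) * exp (0 * t)) has_integral (?A 1 - ?A 0)) {0..1}"
  proof (rule fundamental_theorem_of_calculus)
    fix t :: real
    have "(?A has_real_derivative (1 - t) * exp (0 * t)) (at t)"
      by (rule derivative_eq_intros refl | simp)+
    then show "(?A has_vector_derivative (1 - t) * exp (0 * t)) (at t within {0..1})"
      by (simp add: has_real_derivative_iff_has_vector_derivative has_vector_derivative_at_within)
  qed simp
  then show ?thesis
    unfolding exp_remainder_def by (simp add: integral_unique)
qed

lemma exp_remainder_pos: "0 < exp_remainder x"
proof (cases "x = 0")
  case False
  have "0 < x\<^sup>2 * exp_remainder x"
    using exp_remainder_eq[of x] exp_minus_greater[of "- x"] False by simp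
  then show ?thesis by (simp add: zero_less_mult_iff)
qed (simp add: exp_remainder_0)

lemma Ck_on_sqrt_exp_remainder: "Ck_on n UNIV (\<lambda>x. sqrt (2 * exp_remainder x))"
  by (rule Ck_on_compose[OF Ck_on_sqrt Ck_on_mult[OF Ck_on_const Ck_on_exp_remainder]])
    (auto intro: exp_remainder_pos)

text \<open>sroot is the signed square root of 2 (exp x - x - 1) = 2 (ff x - 1); the factor
  exp_remainder makes its smoothness at 0 evident.\<close>

definition sroot :: "real \<Rightarrow> real" where
  "sroot x = x * sqrt (2 * exp_remainder x)"

lemma Ck_on_sroot: "Ck_on n UNIV sroot"
  unfolding sroot_def[abs_def] by (rule Ck_on_mult[OF Ck_on_ident Ck_on_sqrt_exp_remainder])

lemma continuous_on_sroot: "continuous_on S sroot"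
  using Ck_on_imp_continuous_on[OF Ck_on_sroot[of 0]] continuous_on_subset by blast

lemma has_real_derivative_sroot: "(sroot has_real_derivative deriv sroot x) (at x)"
  using Ck_on_Suc_has_deriv[OF Ck_on_sroot] by blast

lemma sroot_sq: "(sroot x)\<^sup>2 = 2 * (exp x - x - 1)"
  using exp_remainder_eq[of x] exp_remainder_pos[of x]
  by (simp add: sroot_def power_mult_distrib)

lemma ff_eq_sroot: "ff x = 1 + (sroot x)\<^sup>2 / 2"
  unfolding ff_def sroot_sq by (simp add: field_simps)

lemma sroot_0 [simp]: "sroot 0 = 0"
  by (simp add: sroot_def)

lemma sroot_pos_iff [simp]: "0 < sroot x \<longleftrightarrow> 0 < x"
  using exp_remainder_pos[of x] by (simp add: sroot_def zero_less_mult_iff)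

lemma sroot_neg_iff [simp]: "sroot x < 0 \<longleftrightarrow> x < 0"
  using exp_remainder_pos[of x] by (simp add: sroot_def mult_less_0_iff)

lemma deriv_sroot_0: "deriv sroot 0 = 1"
proof -
  let ?q = "\<lambda>x. sqrt (2 * exp_remainder x)"
  have "(?q has_real_derivative deriv ?q 0) (at 0)"
    by (rule Ck_on_Suc_has_deriv[OF Ck_on_sqrt_exp_remainder UNIV_I])
  then have "((\<lambda>x. x * ?q x) has_real_derivative 1 * ?q 0 + deriv ?q 0 * 0) (at 0)"
    by (rule DERIV_mult[OF DERIV_ident])
  then have "(sroot has_real_derivative 1) (at 0)"
    unfolding sroot_def[abs_def] by (simp add: exp_remainder_0)
  then show ?thesis by (rule DERIV_imp_deriv)
qed

lemma deriv_sroot_mult_sroot: "deriv sroot x * sroot x = exp x - 1"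
proof -
  have "((\<lambda>x. sroot x * sroot x) has_real_derivative
      deriv sroot x * sroot x + deriv sroot x * sroot x) (at x)"
    by (rule DERIV_mult[OF has_real_derivative_sroot has_real_derivative_sroot])
  moreover have "(\<lambda>x. sroot x * sroot x) = (\<lambda>x. 2 * (exp x - x - 1))"
    using sroot_sq by (auto simp: power2_eq_square)
  ultimately have "((\<lambda>x. 2 * (exp x - x - 1)) has_real_derivative
      deriv sroot x * sroot x + deriv sroot x * sroot x) (at x)"
    by simp
  moreover have "((\<lambda>x. 2 * (exp x - x - 1)) has_real_derivative 2 * (exp x - 1)) (at x)"
    by (auto intro!: derivative_eq_intros)
  ultimately have "deriv sroot x * sroot x + deriv sroot x * sroot x = 2 * (exp x - 1)"
    by (rule DERIV_unique)
  then show ?thesis by (simp add: algebra_simps)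
qed

lemma deriv_sroot_pos: "0 < deriv sroot x"
proof -
  consider "0 < x" | "x < 0" | "x = 0" by linarith
  then show ?thesis
  proof cases
    case 1
    then have "0 < deriv sroot x * sroot x" by (simp add: deriv_sroot_mult_sroot)
    with 1 show ?thesis by (simp add: zero_less_mult_iff)
  next
    case 2
    then have "deriv sroot x * sroot x < 0" by (simp add: deriv_sroot_mult_sroot)
    with 2 show ?thesis by (simp add: mult_less_0_iff)
  qed (simp add: deriv_sroot_0)
qed

lemma strict_mono_sroot: "strict_mono sroot"
proof (rule strict_monoI)
  fix x y :: real
  assume "x < y"
  then show "sroot x < sroot y"
    using has_real_derivative_sroot deriv_sroot_pos by (blast intro: DERIV_pos_imp_increasing)
qed

lemma sroot_le_iff [simp]: "sroot x \<le> sroot y \<longleftrightarrow> x \<le> y"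
  by (rule strict_mono_less_eq[OF strict_mono_sroot])

lemma sroot_less_iff [simp]: "sroot x < sroot y \<longleftrightarrow> x < y"
  by (rule strict_mono_less[OF strict_mono_sroot])

lemma le_sroot_double:
  assumes "0 \<le> y"
  shows "y \<le> sroot (2 * y)"
proof (rule power2_le_imp_le)
  have "(1 + y)\<^sup>2 \<le> (exp y)\<^sup>2"
    using assms by (intro power_mono) auto
  also have "(exp y)\<^sup>2 = exp (2 * y)"
    by (simp add: power2_eq_square exp_add[symmetric])
  finally have "1 + 2 * y + y\<^sup>2 \<le> exp (2 * y)"
    by (simp add: power2_eq_square algebra_simps)
  then show "y\<^sup>2 \<le> (sroot (2 * y))\<^sup>2"
    unfolding sroot_sq using zero_le_power2[of y] by argo
  show "0 \<le> sroot (2 * y)"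
    using assms sroot_le_iff[of 0 "2 * y"] by simp
qed

lemma sroot_le:
  assumes "y \<le> 0"
  shows "sroot (- (y\<^sup>2 + 1)) \<le> y"
proof -
  have "- y \<le> - sroot (- (y\<^sup>2 + 1))"
  proof (rule power2_le_imp_le)
    show "(- y)\<^sup>2 \<le> (- sroot (- (y\<^sup>2 + 1)))\<^sup>2"
      using exp_gt_zero[of "- (y\<^sup>2 + 1)"] by (simp add: sroot_sq)
    have "- (y\<^sup>2 + 1) \<le> 0"
      using zero_le_power2[of y] by linarith
    then show "0 \<le> - sroot (- (y\<^sup>2 + 1))"
      using sroot_le_iff[of "- (y\<^sup>2 + 1)" 0] by simp
  qed
  then show ?thesis by simp
qed

lemma surj_sroot: "surj sroot"
proof -
  have "y \<in> range sroot" for y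
  proof (cases "0 \<le> y")
    case True
    have "\<exists>x. 0 \<le> x \<and> x \<le> 2 * y \<and> sroot x = y"
      by (rule IVT') (use True le_sroot_double continuous_on_sroot in auto)
    then show ?thesis by auto
  next
    case False
    have "- (y\<^sup>2 + 1) \<le> 0"
      using zero_le_power2[of y] by linarith
    then have "\<exists>x. - (y\<^sup>2 + 1) \<le> x \<and> x \<le> 0 \<and> sroot x = y"
      using False sroot_le continuous_on_sroot by (intro IVT') auto
    then show ?thesis by auto
  qed
  then show ?thesis by blast
qed

lemma bij_sroot: "bij sroot"
  unfolding bij_def using strict_mono_sroot surj_sroot strict_mono_imp_inj_on by blast

lemma inv_sroot_sroot [simp]: "inv sroot (sroot x) = x"
  by (rule inv_f_f[OF bij_is_inj[OF bij_sroot]])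

lemma sroot_inv_sroot [simp]: "sroot (inv sroot y) = y"
  by (rule surj_f_inv_f[OF surj_sroot])

section \<open>The derivative of the inverse of sroot\<close>

lemma Ck_on_inv_sroot: "Ck_on n UNIV (inv sroot)"
proof (rule Ck_on_SucD)
  show "Ck_on (Suc n) UNIV (inv sroot)"
    using deriv_sroot_pos by (intro Ck_on_inverse_function[OF Ck_on_sroot]) (auto simp: less_le)
qed

lemma Ck_on_deriv_inv_sroot: "Ck_on n UNIV (deriv (inv sroot))"
  by (rule Ck_on_deriv[OF open_UNIV Ck_on_inv_sroot])

lemma continuous_on_deriv_inv_sroot: "continuous_on UNIV (deriv (inv sroot))"
  by (rule Ck_on_imp_continuous_on[OF Ck_on_deriv_inv_sroot[of 0]])

lemma continuous_on_deriv2_inv_sroot: "continuous_on UNIV (deriv (deriv (inv sroot)))"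
  by (rule Ck_on_imp_continuous_on[OF Ck_on_deriv[OF open_UNIV Ck_on_deriv_inv_sroot[of "Suc 0"]]])

lemma has_real_derivative_deriv_inv_sroot:
  "(deriv (inv sroot) has_real_derivative deriv (deriv (inv sroot)) y) (at y)"
  using Ck_on_Suc_has_deriv[OF Ck_on_deriv_inv_sroot] by blast

lemma has_real_derivative_inv_sroot:
  "(inv sroot has_real_derivative inverse (deriv sroot (inv sroot y))) (at y)"
  using deriv_sroot_pos
  by (intro has_real_derivative_inverse_function[OF has_real_derivative_sroot]) (auto simp: less_le)

lemma deriv_inv_sroot: "deriv (inv sroot) y = inverse (deriv sroot (inv sroot y))"
  by (rule DERIV_imp_deriv[OF has_real_derivative_inv_sroot])

lemma deriv_inv_sroot_pos: "0 < deriv (inv sroot) y"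
  by (simp add: deriv_inv_sroot deriv_sroot_pos)

lemma deriv_inv_sroot_0: "deriv (inv sroot) 0 = 1"
  using inv_sroot_sroot[of 0] by (simp add: deriv_inv_sroot deriv_sroot_0)

lemma deriv_inv_sroot_identity: "(exp (inv sroot y) - 1) * deriv (inv sroot) y = y"
  using deriv_sroot_mult_sroot[of "inv sroot y"] deriv_sroot_pos[of "inv sroot y"]
  by (simp add: deriv_inv_sroot field_simps)

lemma deriv2_inv_sroot_identity:
  "exp (inv sroot y) * (deriv (inv sroot) y)\<^sup>2 +
     deriv (deriv (inv sroot)) y * (exp (inv sroot y) - 1) = 1"
proof -
  have "((\<lambda>y. exp (inv sroot y) - 1) has_real_derivative exp (inv sroot y) * deriv (inv sroot) y)
      (at y)"
    using has_real_derivative_inv_sroot[of y]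
    by (auto intro!: derivative_eq_intros simp: deriv_inv_sroot)
  then have "((\<lambda>y. (exp (inv sroot y) - 1) * deriv (inv sroot) y) has_real_derivative
      exp (inv sroot y) * deriv (inv sroot) y * deriv (inv sroot) y +
      deriv (deriv (inv sroot)) y * (exp (inv sroot y) - 1)) (at y)"
    by (rule DERIV_mult[OF _ has_real_derivative_deriv_inv_sroot])
  then have "((\<lambda>y. y) has_real_derivative
      exp (inv sroot y) * deriv (inv sroot) y * deriv (inv sroot) y +
      deriv (deriv (inv sroot)) y * (exp (inv sroot y) - 1)) (at y)"
    by (simp add: deriv_inv_sroot_identity)
  then show ?thesis
    using DERIV_unique[OF _ DERIV_ident] by (fastforce simp: power2_eq_square)
qed

lemma min_at_zero_by_deriv_sign:
  fixes F F' :: "real \<Rightarrow> real"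
  assumes F: "\<And>z. (F has_real_derivative F' z) (at z)"
    and sign: "\<And>z. z \<noteq> 0 \<Longrightarrow> 0 < z * F' z" and "x \<noteq> 0"
  shows "F 0 < F x"
proof (cases "0 < x")
  case True
  then obtain z where "0 < z" "z < x" "F x - F 0 = x * F' z"
    using MVT2[of 0 x F F'] F by auto
  moreover from this have "0 < x * F' z"
    using sign[of z] by (simp add: zero_less_mult_iff)
  ultimately show ?thesis by linarith
next
  case False
  with \<open>x \<noteq> 0\<close> obtain z where "x < z" "z < 0" "F 0 - F x = - x * F' z"
    using MVT2[of x 0 F F'] F by auto
  moreover from this have "- x * F' z < 0"
    using sign[of z] by (simp add: zero_less_mult_iff mult_less_0_iff)
  ultimately show ?thesis by linarith
qed

lemma exp_cubic_pos:
  fixes p :: real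
  assumes "p \<noteq> 0"
  shows "0 < (exp p)\<^sup>2 - 6 * exp p + 3 + 2 * exp (- p) + 6 * p"
proof -
  let ?R = "\<lambda>p. (exp p)\<^sup>2 - 6 * exp p + 3 + 2 * exp (- p) + 6 * p"
  have "(?R has_real_derivative 2 * (exp z - 1) ^ 3 / exp z) (at z)" for z :: real
  proof -
    have "(?R has_real_derivative 2 * exp z * exp z - 6 * exp z - 2 * exp (- z) + 6) (at z)"
      by (auto intro!: derivative_eq_intros simp: power2_eq_square)
    also have "2 * exp z * exp z - 6 * exp z - 2 * exp (- z) + 6 = 2 * (exp z - 1) ^ 3 / exp z"
      by (simp add: exp_minus field_simps power3_eq_cube)
    finally show ?thesis .
  qed
  moreover have "0 < z * (2 * (exp z - 1) ^ 3 / exp z)" if "z \<noteq> 0" for z :: real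
  proof -
    have "0 < z * (exp z - 1)"
    proof (cases "0 < z")
      case False
      with that have "z < 0" by linarith
      then show ?thesis by (intro mult_neg_neg) simp_all
    qed (intro mult_pos_pos, simp_all)
    moreover have "0 < (exp z - 1)\<^sup>2"
      using that by simp
    ultimately have "0 < z * (exp z - 1) * (exp z - 1)\<^sup>2"
      by simp
    then show ?thesis
      by (simp add: power2_eq_square power3_eq_cube mult_ac zero_less_mult_iff)
  qed
  ultimately have "?R 0 < ?R p"
    using assms by (rule min_at_zero_by_deriv_sign)
  then show ?thesis by simp
qed

text \<open>With E = exp (inv sroot y) and g = deriv (inv sroot), the two identities above and sroot_sq
  give (E - 1)^3 (g' y + 1/3) = E R / 3, where R > 0 is the expression of exp_cubic_pos; and
  E - 1 has the sign of y.\<close>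

lemma deriv2_inv_sroot_sign:
  assumes "y \<noteq> 0"
  shows "0 < (deriv (deriv (inv sroot)) y + 1/3) * y"
proof -
  define p where "p = inv sroot y"
  define E where "E = exp p"
  define g where "g = deriv (inv sroot) y"
  define d where "d = deriv (deriv (inv sroot)) y"
  have "p \<noteq> 0"
    using assms unfolding p_def by (metis sroot_0 sroot_inv_sroot)
  then have "E \<noteq> 1" "0 < E"
    unfolding E_def by auto
  have y: "y = (E - 1) * g"
    using deriv_inv_sroot_identity[of y] unfolding E_def p_def g_def by simp
  have d: "d * (E - 1) = 1 - E * g\<^sup>2"
    using deriv2_inv_sroot_identity[of y] unfolding E_def p_def g_def d_def by simp
  have y2: "y\<^sup>2 = 2 * (E - p - 1)"
    using sroot_sq[of p] unfolding E_def p_def by simp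
  have exp_minus_p: "exp (- p) = 1 / E"
    unfolding E_def by (simp add: exp_minus inverse_eq_divide)
  have "(E - 1) ^ 3 * (d + 1/3) = (E - 1)\<^sup>2 * (d * (E - 1)) + (E - 1) ^ 3 / 3"
    by (simp add: field_simps power2_eq_square power3_eq_cube)
  also have "\<dots> = (E - 1)\<^sup>2 - E * ((E - 1) * g)\<^sup>2 + (E - 1) ^ 3 / 3"
    unfolding d by (simp add: power2_eq_square algebra_simps)
  also have "\<dots> = (E - 1)\<^sup>2 - 2 * E * (E - p - 1) + (E - 1) ^ 3 / 3"
    using y y2 by simp
  also have "\<dots> = E * (E\<^sup>2 - 6 * E + 3 + 2 * exp (- p) + 6 * p) / 3"
    using \<open>0 < E\<close> unfolding exp_minus_p by (simp add: field_simps power2_eq_square power3_eq_cube)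
  also have "0 < \<dots>"
    using exp_cubic_pos[OF \<open>p \<noteq> 0\<close>] \<open>0 < E\<close> unfolding E_def by simp
  finally have "0 < (E - 1) ^ 3 * (d + 1/3)" .
  moreover have "0 < y * (E - 1)"
  proof -
    have "y * (E - 1) = g * (E - 1)\<^sup>2"
      by (simp add: y power2_eq_square mult_ac)
    then show ?thesis
      using deriv_inv_sroot_pos[of y] \<open>E \<noteq> 1\<close> unfolding g_def by simp
  qed
  ultimately have "0 < ((E - 1) ^ 3 * (d + 1/3)) * (y * (E - 1))"
    by (rule mult_pos_pos)
  also have "\<dots> = (E - 1) ^ 4 * ((d + 1/3) * y)"
    by (simp add: power_numeral_reduce mult_ac)
  finally show ?thesis
    using \<open>E \<noteq> 1\<close> unfolding d_def by (simp add: zero_less_mult_iff)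
qed

lemma deriv_inv_sroot_lower: "(\<bar>y\<bar> - y) / 2 \<le> deriv (inv sroot) y"
proof (cases "y < 0")
  case True
  then have "exp (inv sroot y) < 1"
    by (metis exp_less_one_iff sroot_neg_iff sroot_inv_sroot)
  then have "0 < 1 - exp (inv sroot y)" "1 - exp (inv sroot y) \<le> 1"
    by simp_all
  have "- y = (1 - exp (inv sroot y)) * deriv (inv sroot) y"
    using deriv_inv_sroot_identity[of y] by (simp add: algebra_simps)
  also have "\<dots> \<le> deriv (inv sroot) y"
    using deriv_inv_sroot_pos[of y] \<open>1 - exp (inv sroot y) \<le> 1\<close>
    by (simp add: mult_le_cancel_right1)
  finally show ?thesis using True by simp
qed (use deriv_inv_sroot_pos[of y] in simp)

section \<open>The integral in angular coordinates\<close>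

definition beta_angular :: "real \<Rightarrow> real" where
  "beta_angular a = integral {-(pi/2)..pi/2} (\<lambda>\<theta>. deriv (inv sroot) (a * sin \<theta>))"

lemma Ck_on_beta_angular: "Ck_on n UNIV beta_angular"
proof -
  have "Ck_on n UNIV (\<lambda>a. integral {-(pi/2)..pi/2} (\<lambda>\<theta>. 1 * deriv (inv sroot) (a * sin \<theta>)))"
    by (rule Ck_on_integral_scaled[OF Ck_on_deriv_inv_sroot]) (auto intro: continuous_intros)
  then show ?thesis
    unfolding beta_angular_def[abs_def] by simp
qed

lemma continuous_on_beta_angular: "continuous_on S beta_angular"
  using Ck_on_imp_continuous_on[OF Ck_on_beta_angular[of 0]] continuous_on_subset by blast

lemma has_real_derivative_beta_angular:
  "(beta_angular has_real_derivative
     integral {-(pi/2)..pi/2} (\<lambda>\<theta>. sin \<theta> * deriv (deriv (inv sroot)) (a * sin \<theta>))) (at a)"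
proof -
  have "((\<lambda>a. integral {-(pi/2)..pi/2} (\<lambda>\<theta>. 1 * deriv (inv sroot) (a * sin \<theta>))) has_real_derivative
      integral {-(pi/2)..pi/2} (\<lambda>\<theta>. (1 * sin \<theta>) * deriv (deriv (inv sroot)) (a * sin \<theta>))) (at a)"
    by (rule has_real_derivative_integral_scaled[OF has_real_derivative_deriv_inv_sroot
          continuous_on_deriv2_inv_sroot])
      (auto intro: continuous_intros)
  then show ?thesis
    unfolding beta_angular_def[abs_def] by simp
qed

lemma beta_angular_0: "beta_angular 0 = pi"
  by (simp add: beta_angular_def deriv_inv_sroot_0)

lemma has_integral_sin: "(sin has_integral 0) {-(pi/2)..pi/2}"
proof -
  have "((\<lambda>t. - cos t) has_vector_derivative sin t) (at t within {-(pi/2)..pi/2})" for t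
    by (auto intro!: derivative_eq_intros simp: has_real_derivative_iff_has_vector_derivative[symmetric])
  then show ?thesis
    using fundamental_theorem_of_calculus[of "-(pi/2)" "pi/2" "\<lambda>t. - cos t" sin] by simp
qed

lemma has_integral_sin_sq: "((\<lambda>t. (sin t)\<^sup>2) has_integral pi/2) {-(pi/2)..pi/2}"
proof -
  let ?F = "\<lambda>t. t / 2 - sin t * cos t / 2"
  have "(?F has_vector_derivative (sin t)\<^sup>2) (at t within {-(pi/2)..pi/2})" for t
  proof -
    have "(?F has_real_derivative 1/2 - (cos t * cos t + (- sin t) * sin t) / 2) (at t)"
      by (auto intro!: derivative_eq_intros)
    also have "1/2 - (cos t * cos t + (- sin t) * sin t) / 2 = (sin t)\<^sup>2"
      using sin_cos_squared_add[of t] by (simp add: power2_eq_square field_simps)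
    finally show ?thesis
      by (simp add: has_real_derivative_iff_has_vector_derivative has_vector_derivative_at_within)
  qed
  then show ?thesis
    using fundamental_theorem_of_calculus[of "-(pi/2)" "pi/2" ?F] by simp
qed

lemma deriv_beta_angular_pos:
  assumes a: "0 < a"
  shows "0 < deriv beta_angular a"
proof -
  let ?I = "{-(pi/2)..pi/2}"
  let ?k = "\<lambda>t. sin t * (deriv (deriv (inv sroot)) (a * sin t) + 1/3)"
  have "((\<lambda>t. sin t * deriv (deriv (inv sroot)) (a * sin t)) has_integral deriv beta_angular a) ?I"
    unfolding DERIV_imp_deriv[OF has_real_derivative_beta_angular]
    by (intro integrable_integral integrable_continuous_interval continuous_intros
        continuous_on_compose2[OF continuous_on_deriv2_inv_sroot]) auto
  from has_integral_add[OF this has_integral_mult_right[OF has_integral_sin, of "1/3"]]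
  have k: "(?k has_integral deriv beta_angular a) ?I"
    by (simp add: algebra_simps)
  have k_nonneg: "0 \<le> ?k t" for t
  proof (cases "sin t = 0")
    case False
    with a have "0 < a * ?k t"
      using deriv2_inv_sroot_sign[of "a * sin t"] by (simp add: algebra_simps)
    with a have "0 < ?k t"
      using zero_less_mult_pos by blast
    then show ?thesis by simp
  qed simp
  have "0 < ?k (pi/2)"
    using deriv2_inv_sroot_sign[of a] a by (simp add: zero_less_mult_iff)
  moreover have "?k (pi/2) = 0" if "deriv beta_angular a = 0"
  proof (rule has_integral_0_cbox_imp_0[where f = ?k and a = "-(pi/2)" and b = "pi/2"])
    show "continuous_on (cbox (-(pi/2)) (pi/2)) ?k"
      by (intro continuous_intros continuous_on_compose2[OF continuous_on_deriv2_inv_sroot]) auto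
    show "(?k has_integral 0) (cbox (-(pi/2)) (pi/2))"
      using k that by (simp add: cbox_interval)
    show "box (-(pi/2)) (pi/2) \<noteq> {}"
      by (simp add: box_real not_le)
    show "pi/2 \<in> cbox (-(pi/2)) (pi/2)"
      by (simp add: cbox_interval not_le)
  qed (rule k_nonneg)
  ultimately show ?thesis
    using has_integral_nonneg[OF k k_nonneg] by fastforce
qed

lemma beta_angular_less:
  assumes "0 \<le> a" "a < b"
  shows "beta_angular a < beta_angular b"
proof (rule DERIV_pos_imp_increasing_open[OF \<open>a < b\<close> _ continuous_on_beta_angular])
  fix x assume "a < x" "x < b"
  with assms have "0 < deriv beta_angular x"
    by (intro deriv_beta_angular_pos) simp
  then show "\<exists>y. (beta_angular has_real_derivative y) (at x) \<and> 0 < y"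
    using Ck_on_Suc_has_deriv[OF Ck_on_beta_angular UNIV_I] by blast
qed

lemma beta_angular_lower:
  assumes a: "0 < a"
  shows "a * pi / 4 \<le> beta_angular a"
proof -
  let ?l = "\<lambda>t. (a * (sin t)\<^sup>2 - a * sin t) / 2"
  have l: "(?l has_integral (a * (pi/2) - a * 0) / 2) {-(pi/2)..pi/2}"
    by (intro has_integral_divide has_integral_diff has_integral_mult_right has_integral_sin_sq
        has_integral_sin)
  have "continuous_on {-(pi/2)..pi/2} (\<lambda>t. deriv (inv sroot) (a * sin t))"
    by (rule continuous_on_compose2[OF continuous_on_deriv_inv_sroot]) (auto intro!: continuous_intros)
  then have "((\<lambda>t. deriv (inv sroot) (a * sin t)) has_integral beta_angular a) {-(pi/2)..pi/2}"
    unfolding beta_angular_def by (intro integrable_integral integrable_continuous_interval)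
  moreover have "?l t \<le> deriv (inv sroot) (a * sin t)" for t
  proof -
    have "\<bar>sin t\<bar> * \<bar>sin t\<bar> \<le> \<bar>sin t\<bar> * 1"
      by (rule mult_left_mono) simp_all
    then have "(sin t)\<^sup>2 \<le> \<bar>sin t\<bar>"
      by (simp add: power2_eq_square abs_mult_self_eq)
    then have "a * (sin t)\<^sup>2 \<le> \<bar>a * sin t\<bar>"
      using a by (simp add: abs_mult)
    then show ?thesis
      using deriv_inv_sroot_lower[of "a * sin t"] by argo
  qed
  ultimately have "(a * (pi/2) - a * 0) / 2 \<le> beta_angular a"
    by (rule has_integral_le[OF l])
  then show ?thesis by simp
qed

lemma beta_angular_image: "beta_angular ` {0<..} = {pi<..}"
proof
  show "beta_angular ` {0<..} \<subseteq> {pi<..}"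
    using beta_angular_less[of 0] by (auto simp: beta_angular_0)
  show "{pi<..} \<subseteq> beta_angular ` {0<..}"
  proof
    fix y assume "y \<in> {pi<..}"
    then have y: "pi < y" by simp
    define M where "M = 4 * y / pi"
    have "0 < y"
      using y pi_gt_zero by linarith
    then have "0 < M"
      unfolding M_def by simp
    then have "y \<le> beta_angular M"
      using beta_angular_lower[of M] unfolding M_def by simp
    moreover have "beta_angular 0 \<le> y"
      using y by (simp add: beta_angular_0)
    ultimately obtain a where "0 \<le> a" "a \<le> M" "beta_angular a = y"
      using IVT'[of beta_angular 0 y M] \<open>0 < M\<close> continuous_on_beta_angular by auto
    moreover have "a \<noteq> 0"
      using \<open>beta_angular a = y\<close> y by (auto simp: beta_angular_0)
    ultimately show "y \<in> beta_angular ` {0<..}" by auto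
  qed
qed

section \<open>Expressing beta through beta_angular\<close>

lemma sroot_eq_iff: "sroot x = y \<longleftrightarrow> x = inv sroot y"
  by (metis inv_sroot_sroot sroot_inv_sroot)

lemma phi_lo_sroot:
  assumes "0 \<le> a"
  shows "phi_lo (1 + a\<^sup>2 / 2) = inv sroot (- a)"
proof -
  have "\<phi> \<le> 0 \<and> ff \<phi> = 1 + a\<^sup>2 / 2 \<longleftrightarrow> \<phi> = inv sroot (- a)" for \<phi>
  proof -
    have "\<phi> \<le> 0 \<and> ff \<phi> = 1 + a\<^sup>2 / 2 \<longleftrightarrow> sroot \<phi> \<le> 0 \<and> (sroot \<phi> = a \<or> sroot \<phi> = - a)"
      using sroot_le_iff[of \<phi> 0] by (simp add: ff_eq_sroot power2_eq_iff)
    also have "\<dots> \<longleftrightarrow> sroot \<phi> = - a"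
      using assms by auto
    finally show ?thesis
      by (simp add: sroot_eq_iff)
  qed
  then show ?thesis
    unfolding phi_lo_def by simp
qed

lemma phi_hi_sroot:
  assumes "0 \<le> a"
  shows "phi_hi (1 + a\<^sup>2 / 2) = inv sroot a"
proof -
  have "0 \<le> \<phi> \<and> ff \<phi> = 1 + a\<^sup>2 / 2 \<longleftrightarrow> \<phi> = inv sroot a" for \<phi>
  proof -
    have "0 \<le> \<phi> \<and> ff \<phi> = 1 + a\<^sup>2 / 2 \<longleftrightarrow> 0 \<le> sroot \<phi> \<and> (sroot \<phi> = a \<or> sroot \<phi> = - a)"
      using sroot_le_iff[of 0 \<phi>] by (simp add: ff_eq_sroot power2_eq_iff)
    also have "\<dots> \<longleftrightarrow> sroot \<phi> = a"
      using assms by auto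
    finally show ?thesis
      by (simp add: sroot_eq_iff)
  qed
  then show ?thesis
    unfolding phi_hi_def by simp
qed

text \<open>The substitution sroot phi = a sin theta.\<close>

lemma has_integral_inv_sqrt_sroot:
  assumes a: "0 < a"
  shows "((\<lambda>\<phi>. 1 / sqrt (a\<^sup>2 - (sroot \<phi>)\<^sup>2)) has_integral beta_angular a)
    {inv sroot (- a)..inv sroot a}"
proof -
  define lo where "lo = inv sroot (- a)"
  define hi where "hi = inv sroot a"
  define \<Theta> where "\<Theta> \<phi> = arcsin (sroot \<phi> / a)" for \<phi>
  define \<Theta>' where "\<Theta>' \<phi> = inverse (sqrt (1 - (sroot \<phi> / a)\<^sup>2)) * (deriv sroot \<phi> / a)" for \<phi>
  define F where "F \<theta> = deriv (inv sroot) (a * sin \<theta>)" for \<theta>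
  have "lo < hi"
    using a sroot_less_iff[of lo hi] unfolding lo_def hi_def by simp
  have bounds: "- 1 \<le> sroot \<phi> / a \<and> sroot \<phi> / a \<le> 1" if "\<phi> \<in> {lo..hi}" for \<phi>
    using that a sroot_le_iff[of lo \<phi>] sroot_le_iff[of \<phi> hi] unfolding lo_def hi_def
    by (simp add: field_simps)
  have strict_bounds: "- 1 < sroot \<phi> / a \<and> sroot \<phi> / a < 1" if "\<phi> \<in> {lo<..<hi}" for \<phi>
    using that a sroot_less_iff[of lo \<phi>] sroot_less_iff[of \<phi> hi] unfolding lo_def hi_def
    by (simp add: field_simps)
  have "\<Theta> ` {lo..hi} \<subseteq> {-(pi/2)..pi/2}"
    unfolding \<Theta>_def using bounds arcsin_bounded by fastforce
  moreover have "continuous_on {-(pi/2)..pi/2} F"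
    unfolding F_def
    by (rule continuous_on_compose2[OF continuous_on_deriv_inv_sroot]) (auto intro!: continuous_intros)
  moreover have "continuous_on {lo..hi} \<Theta>"
    unfolding \<Theta>_def
    by (rule continuous_on_arcsin) (use a bounds in \<open>auto intro!: continuous_intros continuous_on_sroot\<close>)
  moreover have "(\<Theta> has_real_derivative \<Theta>' \<phi>) (at \<phi> within {lo..hi})"
    if "\<phi> \<in> {lo..hi} - {lo, hi}" for \<phi>
  proof -
    have "- 1 < sroot \<phi> / a" "sroot \<phi> / a < 1"
      using strict_bounds that by auto
    from DERIV_chain2[OF DERIV_arcsin[OF this] DERIV_cdivide[OF has_real_derivative_sroot]]
    show ?thesis
      unfolding \<Theta>_def[abs_def] \<Theta>'_def by (rule has_field_derivative_at_within)
  qed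
  ultimately have "((\<lambda>\<phi>. \<Theta>' \<phi> *\<^sub>R F (\<Theta> \<phi>)) has_integral
      integral {\<Theta> lo..\<Theta> hi} F - integral {\<Theta> hi..\<Theta> lo} F) {lo..hi}"
    using \<open>lo < hi\<close> by (intro has_integral_substitution_general[of "{lo, hi}"]) auto
  moreover have "\<Theta> lo = -(pi/2)" "\<Theta> hi = pi/2"
    unfolding \<Theta>_def lo_def hi_def using a by simp_all
  ultimately have subst: "((\<lambda>\<phi>. \<Theta>' \<phi> * F (\<Theta> \<phi>)) has_integral beta_angular a) {lo..hi}"
    unfolding beta_angular_def F_def by simp
  have "\<Theta>' \<phi> * F (\<Theta> \<phi>) = 1 / sqrt (a\<^sup>2 - (sroot \<phi>)\<^sup>2)" if "\<phi> \<in> {lo<..<hi}" for \<phi>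
  proof -
    have "- 1 < sroot \<phi> / a" "sroot \<phi> / a < 1"
      using strict_bounds that by auto
    then have "F (\<Theta> \<phi>) = inverse (deriv sroot \<phi>)"
      unfolding F_def \<Theta>_def using a by (simp add: sin_arcsin deriv_inv_sroot)
    moreover have "1 - (sroot \<phi> / a)\<^sup>2 = (a\<^sup>2 - (sroot \<phi>)\<^sup>2) / a\<^sup>2"
      using a by (simp add: power_divide field_simps)
    then have "a * sqrt (1 - (sroot \<phi> / a)\<^sup>2) = sqrt (a\<^sup>2 - (sroot \<phi>)\<^sup>2)"
      using a by (simp add: real_sqrt_divide)
    ultimately show ?thesis
      using deriv_sroot_pos[of \<phi>] unfolding \<Theta>'_def by (simp add: field_simps)
  qed
  then show ?thesis
    unfolding lo_def[symmetric] hi_def[symmetric]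
    by (intro has_integral_spike_finite[OF _ _ subst, of "{lo, hi}"]) auto
qed

lemma beta_param:
  assumes "0 < a"
  shows "beta (1 + a\<^sup>2 / 2) = beta_angular a / sqrt 2"
proof -
  have "1 / sqrt (1 + a\<^sup>2 / 2 - ff \<phi>) = sqrt 2 * (1 / sqrt (a\<^sup>2 - (sroot \<phi>)\<^sup>2))" for \<phi>
    by (simp add: ff_eq_sroot diff_divide_distrib[symmetric] real_sqrt_divide)
  then have "integral {inv sroot (- a)..inv sroot a} (\<lambda>\<phi>. 1 / sqrt (1 + a\<^sup>2 / 2 - ff \<phi>)) =
      sqrt 2 * beta_angular a"
    using has_integral_mult_right[OF has_integral_inv_sqrt_sroot[OF assms], of "sqrt 2"]
    by (simp add: integral_unique)
  moreover have "beta (1 + a\<^sup>2 / 2) =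
      1/2 * integral {inv sroot (- a)..inv sroot a} (\<lambda>\<phi>. 1 / sqrt (1 + a\<^sup>2 / 2 - ff \<phi>))"
    using assms unfolding beta_def by (simp add: phi_lo_sroot phi_hi_sroot)
  ultimately have "beta (1 + a\<^sup>2 / 2) = sqrt 2 / 2 * beta_angular a"
    by simp
  also have "sqrt 2 / 2 = 1 / sqrt 2"
    by (simp add: field_simps)
  finally show ?thesis by simp
qed

lemma beta_eq:
  assumes "1 < x"
  shows "beta x = beta_angular (sqrt (2 * (x - 1))) / sqrt 2"
proof -
  have "x = 1 + (sqrt (2 * (x - 1)))\<^sup>2 / 2"
    using assms by (simp add: field_simps)
  then show ?thesis
    using assms beta_param[of "sqrt (2 * (x - 1))"] by simp
qed

section \<open>Smoothness, monotonicity and range of beta\<close>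

lemma Ck_on_beta: "Ck_on n {1<..} beta"
proof (rule Ck_on_cong[OF open_greaterThan])
  have "Ck_on n {1<..} (\<lambda>x. sqrt (2 * (x + - 1)))"
    by (rule Ck_on_compose[OF Ck_on_sqrt Ck_on_mult[OF Ck_on_const Ck_on_add[OF Ck_on_ident Ck_on_const]]])
      auto
  then show "Ck_on n {1<..} (\<lambda>x. beta_angular (sqrt (2 * (x + - 1))) * (1 / sqrt 2))"
    by (intro Ck_on_mult Ck_on_const Ck_on_compose[OF Ck_on_beta_angular]) auto
qed (simp add: beta_eq)

lemma has_real_derivative_beta:
  assumes "1 < x"
  shows "(beta has_real_derivative
      deriv beta_angular (sqrt (2 * (x - 1))) * inverse (sqrt (2 * (x - 1))) / sqrt 2) (at x)"
proof -
  have lin: "((\<lambda>x. 2 * (x - 1)) has_real_derivative 2) (at x)"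
    by (auto intro!: derivative_eq_intros)
  have "((\<lambda>x. sqrt (2 * (x - 1))) has_real_derivative inverse (sqrt (2 * (x - 1)))) (at x)"
    using DERIV_chain2[OF DERIV_real_sqrt lin] assms by simp
  from DERIV_cdivide[OF DERIV_chain2[OF Ck_on_Suc_has_deriv[OF Ck_on_beta_angular UNIV_I] this]]
  show ?thesis
    by (rule has_field_derivative_transform_within_open[OF _ open_greaterThan])
      (use assms beta_eq in auto)
qed

lemma deriv_beta_pos:
  assumes "1 < x"
  shows "0 < deriv beta x"
proof -
  have "0 < deriv beta_angular (sqrt (2 * (x - 1)))"
    using assms by (intro deriv_beta_angular_pos) simp
  then show ?thesis
    using assms unfolding DERIV_imp_deriv[OF has_real_derivative_beta[OF assms]] by simp
qed

lemma bij_betw_beta: "bij_betw beta {1<..} {pi / sqrt 2<..}"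
proof (rule bij_betw_imageI)
  have "beta x < beta y" if "1 < x" "x < y" for x y
  proof (rule DERIV_pos_imp_increasing[OF \<open>x < y\<close>])
    fix t assume "x \<le> t" "t \<le> y"
    with that have "1 < t" by simp
    then show "\<exists>d. (beta has_real_derivative d) (at t) \<and> 0 < d"
      using has_real_derivative_beta deriv_beta_pos DERIV_imp_deriv by metis
  qed
  then show "inj_on beta {1<..}"
    by (intro strict_mono_on_imp_inj_on) (auto simp: strict_mono_on_def)
  show "beta ` {1<..} = {pi / sqrt 2<..}"
  proof
    show "beta ` {1<..} \<subseteq> {pi / sqrt 2<..}"
    proof
      fix z assume "z \<in> beta ` {1<..}"
      then obtain x where x: "1 < x" "z = beta x" by auto
      then have "beta_angular (sqrt (2 * (x - 1))) \<in> {pi<..}"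
        unfolding beta_angular_image[symmetric] by auto
      then show "z \<in> {pi / sqrt 2<..}"
        using x beta_eq by (simp add: divide_strict_right_mono)
    qed
    show "{pi / sqrt 2<..} \<subseteq> beta ` {1<..}"
    proof
      fix y assume "y \<in> {pi / sqrt 2<..}"
      then have "y * sqrt 2 \<in> beta_angular ` {0<..}"
        unfolding beta_angular_image by (simp add: field_simps)
      then obtain a where "0 < a" "beta_angular a = y * sqrt 2" by auto
      then have "beta (1 + a\<^sup>2 / 2) = y" and "1 + a\<^sup>2 / 2 \<in> {1<..}"
        using beta_param by simp_all
      then show "y \<in> beta ` {1<..}" by (metis image_eqI)
    qed
  qed
qed

theorem proposition2p2:
  shows "(\<forall>n. \<forall>x\<in>{1<..}. ((deriv ^^ n) beta) differentiable (at x))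
    \<and> bij_betw beta {1<..} {pi / sqrt 2<..}
    \<and> (\<forall>x\<in>{1<..}. deriv beta x > 0)"
  using Ck_on_higher_deriv_differentiable[OF open_greaterThan Ck_on_beta] bij_betw_beta deriv_beta_pos
  by auto

end
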